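(* Let $(X,\perp,R)$ be a monadic orthoframe. Then for every $A\subseteq X$: (1) $R[A]^\perp$ is closed under $R$, i.e. $R[R[A]^\perp]=R[A]^\perp$; (2) $R[A]^{\perp\perp}$ is closed under $R$, i.e. $R[R[A]^{\perp\perp}]=R[A]^{\perp\perp}$; (3) $R[A^{\perp\perp}]\subseteq R[A]^{\perp\perp}$.
   Context: An orthoframe $(X,\perp)$ is a set with an irreflexive symmetric binary relation $\perp$; for $A\subseteq X$, $A^\perp=\{x\in X: a\perp x\text{ for all }a\in A\}$. For a binary relation $R$ on $X$ and $A\subseteq X$, $R[A]=\{y: x\,R\,y\text{ for some }x\in A\}$. A monadic orthoframe is $(X,\perp,R)$ with (M1) $\perp$ an orthogonality relation; (M2) $R$ reflexive and transitive; (M3) for each $x\in X$, $R[R[\{x\}]^\perp]\subseteq R[\{x\}]^\perp$. *)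

theory Defs
  imports Main
begin

definition orthogonality :: "'a set \<Rightarrow> ('a \<Rightarrow> 'a \<Rightarrow> bool) \<Rightarrow> bool" where
  "orthogonality X perp \<longleftrightarrow>
     (\<forall>x y. perp x y \<longrightarrow> x \<in> X \<and> y \<in> X) \<and>
     (\<forall>x\<in>X. \<not> perp x x) \<and>
     (\<forall>x\<in>X. \<forall>y\<in>X. perp x y \<longrightarrow> perp y x)"

definition orth_compl :: "'a set \<Rightarrow> ('a \<Rightarrow> 'a \<Rightarrow> bool) \<Rightarrow> 'a set \<Rightarrow> 'a set" where
  "orth_compl X perp A = {x \<in> X. \<forall>a\<in>A. perp a x}"

definition rel_image :: "('a \<Rightarrow> 'a \<Rightarrow> bool) \<Rightarrow> 'a set \<Rightarrow> 'a set" where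
  "rel_image R A = {y. \<exists>x\<in>A. R x y}"

definition monadic_orthoframe :: "'a set \<Rightarrow> ('a \<Rightarrow> 'a \<Rightarrow> bool) \<Rightarrow> ('a \<Rightarrow> 'a \<Rightarrow> bool) \<Rightarrow> bool" where
  "monadic_orthoframe X perp R \<longleftrightarrow>
     orthogonality X perp \<and>
     (\<forall>x y. R x y \<longrightarrow> x \<in> X \<and> y \<in> X) \<and>
     (\<forall>x\<in>X. R x x) \<and>
     (\<forall>x y z. R x y \<longrightarrow> R y z \<longrightarrow> R x z) \<and>
     (\<forall>x\<in>X. rel_image R (orth_compl X perp (rel_image R {x}))
               \<subseteq> orth_compl X perp (rel_image R {x}))"

end

theory Submission
  imports Defs
begin

text \<open>If S is closed under R, every s in S has its whole cone R[{s}] inside S, so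
  S-perp is contained in R[{s}]-perp. Axiom (M3) keeps R-successors of points of S-perp inside
  R[{s}]-perp, and reflexivity puts s into R[{s}], so they are orthogonal to s. Hence the
  orthocomplement of an R-closed set is R-closed; (1) and (2) follow by applying this once and
  twice to the R-closed set R[A], and (3) is monotonicity, since A is contained in R[A].\<close>

lemma rel_image_mono: "A \<subseteq> B \<Longrightarrow> rel_image R A \<subseteq> rel_image R B"
  unfolding rel_image_def by blast

lemma orth_compl_antimono: "A \<subseteq> B \<Longrightarrow> orth_compl X perp B \<subseteq> orth_compl X perp A"
  unfolding orth_compl_def by blast

lemma orth_compl_subset: "orth_compl X perp A \<subseteq> X"
  unfolding orth_compl_def by blast

context
  fixes X :: "'a set" and perp R :: "'a \<Rightarrow> 'a \<Rightarrow> bool"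
  assumes frame: "monadic_orthoframe X perp R"
begin

lemma rel_image_subset_carrier: "rel_image R A \<subseteq> X"
  using frame unfolding monadic_orthoframe_def rel_image_def by blast

lemma subset_rel_image: "A \<subseteq> X \<Longrightarrow> A \<subseteq> rel_image R A"
  using frame unfolding monadic_orthoframe_def rel_image_def by blast

lemma rel_image_rel_image_subset: "rel_image R (rel_image R A) \<subseteq> rel_image R A"
  using frame unfolding monadic_orthoframe_def rel_image_def by blast

lemma rel_image_eq_if_closed:
  assumes "S \<subseteq> X" "rel_image R S \<subseteq> S"
  shows "rel_image R S = S"
  using assms subset_rel_image by blast

lemma rel_image_orth_compl_subset:
  assumes S: "S \<subseteq> X" and closed: "rel_image R S \<subseteq> S"
  shows "rel_image R (orth_compl X perp S) \<subseteq> orth_compl X perp S"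
proof
  fix y assume "y \<in> rel_image R (orth_compl X perp S)"
  then obtain x where x: "x \<in> orth_compl X perp S" "R x y" by (auto simp: rel_image_def)
  have "perp s y" if s: "s \<in> S" for s
  proof -
    have sX: "s \<in> X" using s S by blast
    have "rel_image R {s} \<subseteq> S" using closed s by (auto simp: rel_image_def)
    then have "x \<in> orth_compl X perp (rel_image R {s})"
      using x(1) orth_compl_antimono by blast
    then have "y \<in> rel_image R (orth_compl X perp (rel_image R {s}))"
      using x(2) by (auto simp: rel_image_def)
    then have "y \<in> orth_compl X perp (rel_image R {s})"
      using frame sX unfolding monadic_orthoframe_def by blast
    moreover have "s \<in> rel_image R {s}" using subset_rel_image sX by blast
    ultimately show "perp s y" by (simp add: orth_compl_def)
  qed
  moreover have "y \<in> X" using x(2) frame unfolding monadic_orthoframe_def by blast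
  ultimately show "y \<in> orth_compl X perp S" by (simp add: orth_compl_def)
qed

lemma rel_image_orth_compl_eq:
  assumes "S \<subseteq> X" "rel_image R S \<subseteq> S"
  shows "rel_image R (orth_compl X perp S) = orth_compl X perp S"
  using rel_image_eq_if_closed[OF orth_compl_subset rel_image_orth_compl_subset[OF assms]] .

end

theorem mainTheorem17:
  fixes X :: "'a set" and perp R :: "'a \<Rightarrow> 'a \<Rightarrow> bool" and A :: "'a set"
  assumes "monadic_orthoframe X perp R"
    and "A \<subseteq> X"
  shows "rel_image R (orth_compl X perp (rel_image R A)) = orth_compl X perp (rel_image R A)
    \<and> rel_image R (orth_compl X perp (orth_compl X perp (rel_image R A)))
        = orth_compl X perp (orth_compl X perp (rel_image R A))
    \<and> rel_image R (orth_compl X perp (orth_compl X perp A))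
        \<subseteq> orth_compl X perp (orth_compl X perp (rel_image R A))"
proof -
  note frame = assms(1)
  have closed1: "rel_image R (orth_compl X perp (rel_image R A)) = orth_compl X perp (rel_image R A)"
    using rel_image_orth_compl_eq[OF frame rel_image_subset_carrier[OF frame]
        rel_image_rel_image_subset[OF frame]] .
  have closed2: "rel_image R (orth_compl X perp (orth_compl X perp (rel_image R A)))
      = orth_compl X perp (orth_compl X perp (rel_image R A))"
    using rel_image_orth_compl_eq[OF frame orth_compl_subset equalityD1[OF closed1]] .
  have "orth_compl X perp (orth_compl X perp A)
      \<subseteq> orth_compl X perp (orth_compl X perp (rel_image R A))"
    using subset_rel_image[OF frame assms(2)] by (intro orth_compl_antimono)
  then have "rel_image R (orth_compl X perp (orth_compl X perp A))
      \<subseteq> orth_compl X perp (orth_compl X perp (rel_image R A))"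
    using rel_image_mono closed2 by blast
  with closed1 closed2 show ?thesis by simp
qed

end
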